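(* Let $\mathcal{A}$ be a unital algebra over a field $F$ with $\operatorname{char}(F)\neq2$, having an idempotent $e\neq 0,1$, and write $e^{\perp}=1-e$. Assume that for every $x\in\mathcal{A}$: if $exe\cdot e\mathcal{A}e^{\perp}=\{0\}=e^{\perp}\mathcal{A}e\cdot exe$ then $exe=0$, and if $e\mathcal{A}e^{\perp}\cdot e^{\perp}xe^{\perp}=\{0\}=e^{\perp}xe^{\perp}\cdot e^{\perp}\mathcal{A}e$ then $e^{\perp}xe^{\perp}=0$. Then $\operatorname{JCent}(\mathcal{A})=\operatorname{Cent}(\mathcal{A})$.
   Context: $x\circ y=xy+yx$. $\operatorname{JCent}(\mathcal{A})$: linear $f:\mathcal{A}\to\mathcal{A}$ with $f(x\circ y)=f(x)\circ y$ for all $x,y$. $\operatorname{Cent}(\mathcal{A})$: linear $f$ with $f(xy)=f(x)y=xf(y)$ for all $x,y$. *)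

theory Defs
  imports Main "HOL.Vector_Spaces"
begin

text \<open>Unital associative algebra over a field: the ring structure is the type class
  ring_1 on 'a, and the scalar multiplication by the field 'k is sc, which must make
  'a a vector space over 'k and be compatible with the multiplication.\<close>

definition is_algebra :: "('k::field \<Rightarrow> 'a::ring_1 \<Rightarrow> 'a) \<Rightarrow> bool" where
  "is_algebra sc \<longleftrightarrow> Vector_Spaces.vector_space sc \<and>
     (\<forall>c x y. sc c (x * y) = sc c x * y \<and> sc c (x * y) = x * sc c y)"

definition jprod :: "'a::ring \<Rightarrow> 'a \<Rightarrow> 'a" (infixl "\<circ>\<^sub>J" 70) where
  "x \<circ>\<^sub>J y = x * y + y * x"

definition JCent :: "('k::field \<Rightarrow> 'a::ring_1 \<Rightarrow> 'a) \<Rightarrow> ('a \<Rightarrow> 'a) set" where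
  "JCent sc = {f. Vector_Spaces.linear sc sc f \<and> (\<forall>x y. f (x \<circ>\<^sub>J y) = f x \<circ>\<^sub>J y)}"

definition Cent :: "('k::field \<Rightarrow> 'a::ring_1 \<Rightarrow> 'a) \<Rightarrow> ('a \<Rightarrow> 'a) set" where
  "Cent sc = {f. Vector_Spaces.linear sc sc f \<and> (\<forall>x y. f (x * y) = f x * y \<and> f (x * y) = x * f y)}"

end

theory Submission
  imports Defs
begin

text \<open>Let \<open>f\<close> be a Jordan centralizer and \<open>a = f 1\<close>. Putting \<open>x = 1\<close> in
  \<open>f (x \<circ> y) = f x \<circ> y\<close> gives \<open>2 f y = a y + y a\<close>, and feeding this back into the
  Jordan identity shows that every commutator \<open>[a, y]\<close> is central. Such an \<open>a\<close> commutes
  with the idempotent \<open>e\<close>, so \<open>[a, e y e]\<close> is a central element of the corner \<open>e A e\<close>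
  and the first nondegeneracy hypothesis kills it; likewise for \<open>e\<^sup>\<bottom>\<close>. Hence
  \<open>[a, y] = [a, y] e + [a, y] e\<^sup>\<bottom> = 0\<close>, so \<open>a\<close> is central and \<open>f y = a y\<close>
  is a centralizer.\<close>

lemma Cent_subset_JCent: "Cent sc \<subseteq> JCent sc"
proof
  fix f assume "f \<in> Cent sc"
  then have lin: "Vector_Spaces.linear sc sc f"
    and mult: "\<And>x y. f (x * y) = f x * y \<and> f (x * y) = x * f y"
    unfolding Cent_def by blast+
  have "f (x \<circ>\<^sub>J y) = f x \<circ>\<^sub>J y" for x y
  proof -
    have "f (x \<circ>\<^sub>J y) = f (x * y) + f (y * x)"
      unfolding jprod_def using lin by (simp add: module_hom.add linear_iff_module_hom)
    also have "\<dots> = f x * y + y * f x" using mult by metis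
    finally show ?thesis by (simp add: jprod_def)
  qed
  with lin show "f \<in> JCent sc" by (simp add: JCent_def)
qed

lemma JCent_double:
  assumes "f \<in> JCent sc"
  shows "f y + f y = f 1 * y + y * f 1"
proof -
  have "module_hom sc sc f" using assms by (simp add: JCent_def linear_iff_module_hom)
  then have "f (y + y) = f y + f y" by (rule module_hom.add)
  moreover have "f (1 \<circ>\<^sub>J y) = f 1 \<circ>\<^sub>J y" using assms by (simp add: JCent_def)
  ultimately show ?thesis by (simp add: jprod_def)
qed

lemma JCent_commutator_central:
  assumes f: "f \<in> JCent sc"
  defines "a \<equiv> f 1"
  shows "(a * y - y * a) * x = x * (a * y - y * a)"
proof -
  have "a * (x \<circ>\<^sub>J y) + (x \<circ>\<^sub>J y) * a = f (x \<circ>\<^sub>J y) + f (x \<circ>\<^sub>J y)"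
    using JCent_double[OF f] by (simp add: a_def)
  also have "\<dots> = (f x + f x) * y + y * (f x + f x)"
    using f by (simp add: JCent_def jprod_def algebra_simps)
  also have "\<dots> = (a * x + x * a) * y + y * (a * x + x * a)"
    using JCent_double[OF f] by (simp add: a_def)
  finally have "a*x*y + a*y*x + x*y*a + y*x*a = a*x*y + x*a*y + y*a*x + y*x*a"
    by (simp add: jprod_def algebra_simps)
  then have "a*y*x + x*y*a = x*a*y + y*a*x" by (simp add: add.assoc)
  then show ?thesis by (simp add: algebra_simps)
qed

lemma idempotent_commute_if_commutator_commute:
  fixes a e :: "'a::ring"
  assumes idem: "e * e = e" and comm: "e * (a * e - e * a) = (a * e - e * a) * e"
  shows "a * e = e * a"
proof -
  define z where "z = a * e - e * a"
  have e_absorb: "e * (e * x) = e * x" for x by (metis idem mult.assoc)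
  have split: "z = e * z + z * e"
    unfolding z_def by (simp add: algebra_simps idem e_absorb mult.assoc)
  have ez: "e * z = z * e" using comm by (simp add: z_def)
  have "e * z = e * (e * z + z * e)" using split by simp
  also have "\<dots> = e * (e * z) + e * (e * z)" by (simp add: distrib_left ez)
  also have "\<dots> = e * z + e * z" by (simp add: e_absorb)
  finally have "e * z = 0" by simp
  then have "z = 0" using split ez by simp
  then show ?thesis by (simp add: z_def)
qed

lemma central_corner_eq_zero:
  fixes p q w :: "'a::ring"
  assumes pq: "p * q = 0" and qp: "q * p = 0"
    and corner: "p * w * p = w" and central: "\<And>x. w * x = x * w"
    and nondeg: "(\<forall>b. (p * w * p) * (p * b * q) = 0) \<Longrightarrow>
                 (\<forall>b. (q * b * p) * (p * w * p) = 0) \<Longrightarrow> p * w * p = 0"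
  shows "w = 0"
proof -
  have "(p * w * p) * (p * b * q) = 0" for b
  proof -
    have "(p * w * p) * (p * b * q) = p * b * q * w" using corner central by simp
    also have "\<dots> = p * b * q * (p * w * p)" using corner by simp
    also have "\<dots> = p * b * (q * p) * w * p" by (simp add: mult.assoc)
    finally show ?thesis using qp by simp
  qed
  moreover have "(q * b * p) * (p * w * p) = 0" for b
  proof -
    have "(q * b * p) * (p * w * p) = w * (q * b * p)" using corner central by simp
    also have "\<dots> = (p * w * p) * (q * b * p)" using corner by simp
    also have "\<dots> = p * w * (p * q) * b * p" by (simp add: mult.assoc)
    finally show ?thesis using pq by simp
  qed
  ultimately show ?thesis using nondeg corner by auto
qed

lemma commutator_mult_corner_eq_zero:
  fixes a p q y :: "'a::ring"
  assumes idem: "p * p = p" and pq: "p * q = 0" and qp: "q * p = 0"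
    and ap: "a * p = p * a"
    and central: "\<And>x y. (a * y - y * a) * x = x * (a * y - y * a)"
    and nondeg: "\<And>x. (\<forall>b. (p * x * p) * (p * b * q) = 0) \<Longrightarrow>
                      (\<forall>b. (q * b * p) * (p * x * p) = 0) \<Longrightarrow> p * x * p = 0"
  shows "(a * y - y * a) * p = 0"
proof -
  define c where "c = a * y - y * a"
  have "a * (p * y * p) = p * (a * y) * p" "(p * y * p) * a = p * (y * a) * p"
    using ap by (metis mult.assoc)+
  then have corner_commutator: "p * c * p = a * (p * y * p) - (p * y * p) * a"
    unfolding c_def by (simp add: right_diff_distrib left_diff_distrib)
  have "p * c * p = 0"
  proof (rule central_corner_eq_zero[OF pq qp])
    show "p * (p * c * p) * p = p * c * p" by (metis idem mult.assoc)
    show "p * c * p * x = x * (p * c * p)" for x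
      unfolding corner_commutator by (rule central)
  qed (use nondeg in blast)
  moreover have "p * c * p = c * p"
    using central[of y p] idem unfolding c_def by (metis mult.assoc)
  ultimately show ?thesis by (simp add: c_def)
qed

lemma double_cancel:
  fixes sc :: "'k::field \<Rightarrow> 'a::ab_group_add \<Rightarrow> 'a"
  assumes vs: "Vector_Spaces.vector_space sc" and char: "(2::'k) \<noteq> 0"
    and eq: "u + u = v + v"
  shows "u = (v :: 'a)"
proof -
  interpret vector_space sc by (rule vs)
  have "sc 2 z = z + z" for z
    using scale_left_distrib[of 1 1 z] by simp
  then have "sc 2 u = sc 2 v" using eq by simp
  then show ?thesis using char by simp
qed

lemma JCent_in_Cent_if_unit_image_central:
  fixes sc :: "'k::field \<Rightarrow> 'a::ring_1 \<Rightarrow> 'a"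
  assumes vs: "Vector_Spaces.vector_space sc" and char: "(2::'k) \<noteq> 0"
    and f: "f \<in> JCent sc" and central: "\<And>y. f 1 * y = y * f 1"
  shows "f \<in> Cent sc"
proof -
  define a where "a = f 1"
  have a_central: "a * y = y * a" for y
    using central by (simp add: a_def)
  have f_eq: "f y = a * y" for y
    using double_cancel[OF vs char] JCent_double[OF f, of y] a_central[of y] by (metis a_def)
  have "f (x * y) = f x * y \<and> f (x * y) = x * f y" for x y
    unfolding f_eq by (metis a_central mult.assoc)
  with f show ?thesis unfolding JCent_def Cent_def by blast
qed

theorem proposition3p7:
  fixes sc :: "'k::field \<Rightarrow> 'a::ring_1 \<Rightarrow> 'a" and e :: 'a
  assumes alg: "is_algebra sc"
    and char: "(2::'k) \<noteq> 0"
    and idem: "e * e = e" and e0: "e \<noteq> 0" and e1: "e \<noteq> 1"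
    and H1: "\<And>x. (\<forall>a. (e * x * e) * (e * a * (1 - e)) = 0) \<Longrightarrow>
                  (\<forall>a. ((1 - e) * a * e) * (e * x * e) = 0) \<Longrightarrow> e * x * e = 0"
    and H2: "\<And>x. (\<forall>a. (e * a * (1 - e)) * ((1 - e) * x * (1 - e)) = 0) \<Longrightarrow>
                  (\<forall>a. ((1 - e) * x * (1 - e)) * ((1 - e) * a * e) = 0) \<Longrightarrow>
                  (1 - e) * x * (1 - e) = 0"
  shows "JCent sc = Cent sc"
proof
  show "JCent sc \<subseteq> Cent sc"
  proof
    fix f assume f: "f \<in> JCent sc"
    have vs: "Vector_Spaces.vector_space sc" using alg by (simp add: is_algebra_def)
    define a where "a = f 1"
    have central: "(a * y - y * a) * x = x * (a * y - y * a)" for x y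
      using JCent_commutator_central[OF f] by (simp add: a_def)
    have ae: "a * e = e * a"
      by (rule idempotent_commute_if_commutator_commute[OF idem]) (use central in simp)
    have orth: "e * (1 - e) = 0" "(1 - e) * e = 0" "(1 - e) * (1 - e) = 1 - e"
      using idem by (simp_all add: algebra_simps)
    have ae_perp: "a * (1 - e) = (1 - e) * a" using ae by (simp add: algebra_simps)
    have "(a * y - y * a) * e = 0" for y
      by (rule commutator_mult_corner_eq_zero[OF idem orth(1,2) ae central H1]) blast+
    moreover have "(a * y - y * a) * (1 - e) = 0" for y
      by (rule commutator_mult_corner_eq_zero[OF orth(3,2,1) ae_perp central H2]) blast+
    ultimately have "a * y = y * a" for y by (simp add: algebra_simps)
    then show "f \<in> Cent sc"
      using JCent_in_Cent_if_unit_image_central[OF vs char f] unfolding a_def by blast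
  qed
qed (rule Cent_subset_JCent)

end
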